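(* Let $m,d,R\ge1$ be integers, $0<\lambda<\sigma<1$, $L_A,L_C,L_Z\ge0$, $\eta^0>0$, $c^*\ge0$, $D\ge0$, and let $\omega\in[0,\bar\omega(\sigma))$ where $\bar\omega(\sigma)=\frac{\sigma}{R}\cdot\frac{\sigma-\lambda}{\sigma-\lambda+2L_AL_Z[R\psi]^2}$ and $\psi=\max\{1,(2L_C)^{R-1}\}$. Define $$V_0=\max\{c^*,D\}+\frac{L_A\psi\sqrt{md}\,R^2\eta^0}{\sigma-\lambda}\cdot\frac{1+\frac{R\omega}{\sigma}[(1+L_C\sigma)\psi-1]}{1-\omega/\bar\omega(\sigma)},$$ $F^0=0$ and, for $s\in[R]$, $$F^s=\frac{\sqrt{md}\,\eta^0(1+L_C\sigma)+2L_ZV_0}{\sigma-\omega}\sum_{s'=0}^{s-1}\Big(\frac{2L_C}{1-\omega/\sigma}\Big)^{s'}.$$ Let $\tilde L_A=L_A\sum_{s=0}^{R-1}L_C^s$ and $\mathbf F=(F^1,\dots,F^R)$. Then $$V_0\ge\max\Big\{D,\ \frac{\sqrt{md}\,R\eta^0+\omega\sum_{s=1}^RF^s}{\sigma-\lambda}\,\tilde L_A\Big\},$$ and for every $s\in[R]$, $$F^s\ge\max\Big\{L_Zc^*+L_C\sqrt{md}\,\eta^0+L_C(1+\omega)F^{s-1},\ \frac{\sqrt{md}\,\eta^0(1+L_C\sigma)+L_C\sigma(1+\omega)F^{s-1}+L_Z(1+\sigma)V_0}{\sigma-\omega}\Big\}.$$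
   Context: All quantities are real numbers; $[R]=\{1,\dots,R\}$. Note that $\omega<\bar\omega(\sigma)\le\sigma/R$. *)

theory Defs
  imports Complex_Main
begin

definition psi :: "real \<Rightarrow> nat \<Rightarrow> real" where
  "psi L_C R = max 1 ((2 * L_C) ^ (R - 1))"

definition omega_bar :: "nat \<Rightarrow> real \<Rightarrow> real \<Rightarrow> real \<Rightarrow> real \<Rightarrow> real \<Rightarrow> real" where
  "omega_bar R \<sigma> lam L_A L_Z L_C =
     (\<sigma> / real R) * ((\<sigma> - lam) / (\<sigma> - lam + 2 * L_A * L_Z * (real R * psi L_C R)\<^sup>2))"

definition V0 :: "nat \<Rightarrow> nat \<Rightarrow> nat \<Rightarrow> real \<Rightarrow> real \<Rightarrow> real \<Rightarrow> real \<Rightarrow> real \<Rightarrow> real \<Rightarrow> real \<Rightarrow> real \<Rightarrow> real \<Rightarrow> real" where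
  "V0 m d R \<sigma> lam L_A L_C L_Z \<eta>0 cstar D \<omega> =
     max cstar D
     + (L_A * psi L_C R * sqrt (real m * real d) * (real R)\<^sup>2 * \<eta>0) / (\<sigma> - lam)
       * ((1 + (real R * \<omega> / \<sigma>) * ((1 + L_C * \<sigma>) * psi L_C R - 1))
          / (1 - \<omega> / omega_bar R \<sigma> lam L_A L_Z L_C))"

definition Fseq :: "nat \<Rightarrow> nat \<Rightarrow> nat \<Rightarrow> real \<Rightarrow> real \<Rightarrow> real \<Rightarrow> real \<Rightarrow> real \<Rightarrow> real \<Rightarrow> real \<Rightarrow> real \<Rightarrow> real \<Rightarrow> nat \<Rightarrow> real" where
  "Fseq m d R \<sigma> lam L_A L_C L_Z \<eta>0 cstar D \<omega> s =
     (if s = 0 then 0 else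
      (sqrt (real m * real d) * \<eta>0 * (1 + L_C * \<sigma>) + 2 * L_Z * V0 m d R \<sigma> lam L_A L_C L_Z \<eta>0 cstar D \<omega>)
        / (\<sigma> - \<omega>) * (\<Sum>s'<s. (2 * L_C / (1 - \<omega> / \<sigma>)) ^ s'))"

end

theory Submission
  imports Defs
begin

text \<open>With \<open>a = sqrt(md) \<eta>0\<close> and \<open>u = R \<omega>/\<sigma>\<close>, the sequence satisfies \<open>F s = K + q F (s-1)\<close>
  where \<open>q = 2 L_C \<sigma>/(\<sigma>-\<omega>)\<close> and \<open>K = (a(1 + L_C \<sigma>) + 2 L_Z V0)/(\<sigma>-\<omega>)\<close>, so the bounds on
  \<open>F s\<close> follow by comparing coefficients, using \<open>\<omega> < \<sigma> < 1\<close>. Summing the geometric series,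
  \<open>\<omega> \<Sum>F = G (a(1 + L_C \<sigma>) + 2 L_Z V0)\<close>, and Bernoulli's inequality
  \<open>(1 - \<omega>/\<sigma>)^(j+1) \<ge> 1 - u\<close> gives \<open>G (1-u) \<le> u R \<psi>\<close>. Since \<open>L_A \<Sum>L_C^s \<le> \<Lambda> = L_A R \<psi>\<close>,
  the bound on \<open>V0\<close> reduces to the linear inequality
  \<open>\<Lambda> a (R + G(1 + L_C \<sigma>)) \<le> (\<sigma> - \<lambda> - 2 L_Z \<Lambda> G) V0\<close>, and the second summand of \<open>V0\<close> is
  exactly what it requires once \<open>G\<close> is replaced by its bound; \<open>\<omega> < \<omega>bar\<close> says that the
  resulting denominator \<open>(\<sigma>-\<lambda>)(1 - \<omega>/\<omega>bar)\<close> is positive.\<close>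

lemma one_le_psi: "1 \<le> psi L_C R"
  by (simp add: psi_def)

lemma power_le_psi:
  fixes L_C :: real
  assumes "j < R" "0 \<le> L_C"
  shows "(2 * L_C) ^ j \<le> psi L_C R" "L_C ^ j \<le> psi L_C R"
proof -
  have "(2 * L_C) ^ j \<le> max 1 ((2 * L_C) ^ (R - 1))"
  proof (cases "2 * L_C \<le> 1")
    case True
    then show ?thesis using assms power_le_one[of "2 * L_C" j] by linarith
  next
    case False
    then have "(2 * L_C) ^ j \<le> (2 * L_C) ^ (R - 1)"
      using assms by (intro power_increasing) auto
    then show ?thesis by simp
  qed
  then show pow2: "(2 * L_C) ^ j \<le> psi L_C R" by (simp add: psi_def)
  have "L_C ^ j \<le> (2 * L_C) ^ j" using assms by (intro power_mono) auto
  with pow2 show "L_C ^ j \<le> psi L_C R" by simp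
qed

lemma sum_powers_le_psi:
  fixes L_C :: real
  assumes "0 \<le> L_C"
  shows "(\<Sum>s<R. L_C ^ s) \<le> real R * psi L_C R"
proof -
  have "(\<Sum>s<R. L_C ^ s) \<le> (\<Sum>s<R. psi L_C R)"
    using assms by (intro sum_mono power_le_psi(2)) auto
  then show ?thesis by simp
qed

lemma power_div_one_minus_le_psi:
  fixes L_C t :: real
  assumes "0 \<le> t" "t < 1" "0 \<le> L_C" "j < R"
  shows "(2 * L_C / (1 - t)) ^ j * (1 - real R * t) \<le> psi L_C R * (1 - t)"
proof -
  have "1 - real R * t \<le> 1 + real (Suc j) * (- t)"
    using assms(1,4) mult_right_mono[of "real (Suc j)" "real R" t] by simp
  also have "\<dots> \<le> (1 - t) ^ Suc j"
    using Bernoulli_inequality[of "- t" "Suc j"] assms(2) by simp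
  finally have "(2 * L_C / (1 - t)) ^ j * (1 - real R * t)
      \<le> (2 * L_C / (1 - t)) ^ j * (1 - t) ^ Suc j"
    using assms by (intro mult_left_mono) auto
  also have "\<dots> = (2 * L_C) ^ j * (1 - t)"
    using assms(2) by (simp add: power_divide field_simps)
  also have "\<dots> \<le> psi L_C R * (1 - t)"
    using power_le_psi(1)[OF assms(4,3)] assms(2) by (intro mult_right_mono) auto
  finally show ?thesis .
qed

lemma sum_partial_geometric_sums_le:
  fixes L_C t :: real
  assumes "0 \<le> t" "t < 1" "0 \<le> L_C"
  shows "(\<Sum>s=1..R. \<Sum>j<s. (2 * L_C / (1 - t)) ^ j) * (1 - real R * t)
         \<le> (real R)\<^sup>2 * psi L_C R * (1 - t)"
proof -
  have psi_nonneg: "0 \<le> psi L_C R * (1 - t)"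
    using assms(2) one_le_psi[of L_C R] by simp
  have "(\<Sum>s=1..R. \<Sum>j<s. (2 * L_C / (1 - t)) ^ j) * (1 - real R * t)
      = (\<Sum>s=1..R. \<Sum>j<s. (2 * L_C / (1 - t)) ^ j * (1 - real R * t))"
    by (simp add: sum_distrib_right)
  also have "\<dots> \<le> (\<Sum>s=1..R. \<Sum>j<s. psi L_C R * (1 - t))"
    using assms by (intro sum_mono power_div_one_minus_le_psi) auto
  also have "\<dots> = (\<Sum>s=1..R. real s * (psi L_C R * (1 - t)))"
    by simp
  also have "\<dots> \<le> (\<Sum>s=1..R. real R * (psi L_C R * (1 - t)))"
    using psi_nonneg by (intro sum_mono mult_right_mono) auto
  also have "\<dots> = (real R)\<^sup>2 * psi L_C R * (1 - t)"
    by (simp add: power2_eq_square)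
  finally show ?thesis .
qed

lemma omega_bar_le_sigma_div:
  assumes "0 \<le> \<sigma>" "lam < \<sigma>" "0 \<le> L_A" "0 \<le> L_Z"
  shows "omega_bar R \<sigma> lam L_A L_Z L_C \<le> \<sigma> / real R"
proof -
  have "0 \<le> 2 * L_A * L_Z * (real R * psi L_C R)\<^sup>2"
    using assms by simp
  then have "(\<sigma> - lam) / (\<sigma> - lam + 2 * L_A * L_Z * (real R * psi L_C R)\<^sup>2) \<le> 1"
    using assms(2) by (simp add: divide_le_eq_1)
  then have "\<sigma> / real R * ((\<sigma> - lam) / (\<sigma> - lam + 2 * L_A * L_Z * (real R * psi L_C R)\<^sup>2))
      \<le> \<sigma> / real R * 1"
    by (rule mult_left_mono) (use assms(1) in simp)
  then show ?thesis
    by (simp only: omega_bar_def mult_1_right)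
qed

lemma sigma_minus_lam_mult_one_minus_div_omega_bar:
  assumes "R \<ge> 1" "0 < \<sigma>" "lam < \<sigma>" "0 \<le> L_A" "0 \<le> L_Z"
  shows "(\<sigma> - lam) * (1 - \<omega> / omega_bar R \<sigma> lam L_A L_Z L_C)
       = (\<sigma> - lam) * (1 - real R * \<omega> / \<sigma>)
         - real R * \<omega> / \<sigma> * (2 * L_Z * (L_A * real R * psi L_C R)) * real R * psi L_C R"
proof -
  have "0 \<le> 2 * L_A * L_Z * (real R * psi L_C R)\<^sup>2"
    using assms by simp
  then have "0 < \<sigma> - lam + 2 * L_A * L_Z * (real R * psi L_C R)\<^sup>2"
    using assms(3) by linarith
  then show ?thesis
    using assms unfolding omega_bar_def by (simp add: field_simps power2_eq_square)
qed

text \<open>With \<open>N = 1 + u (k \<psi> - 1)\<close> the key identity is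
  \<open>r N (P - Z G) - (r + G k) D = (P k + Z r) (u r \<psi> - G (1 - u))\<close>.\<close>

lemma linear_fixed_point_bound:
  fixes P Z k u G r \<psi> c M V :: real
  defines "D \<equiv> P * (1 - u) - u * Z * r * \<psi>"
  assumes "0 < P" "0 \<le> Z" "0 \<le> k" "0 \<le> r" "u < 1" "0 \<le> c" "0 \<le> M"
    and "G * (1 - u) \<le> u * r * \<psi>" "0 < D"
    and V: "V = M + c * r * (1 + u * (k * \<psi> - 1)) / D"
  shows "c * (r + G * k) + Z * G * V \<le> P * V"
proof -
  have "D \<le> (P - Z * G) * (1 - u)"
    using mult_left_mono[OF assms(9) assms(3)] unfolding D_def by (simp add: algebra_simps)
  then have "0 < (P - Z * G) * (1 - u)"
    using \<open>0 < D\<close> by simp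
  then have margin_pos: "0 < P - Z * G"
    using \<open>u < 1\<close> by (simp add: zero_less_mult_iff)
  have "r * (1 + u * (k * \<psi> - 1)) * (P - Z * G) - (r + G * k) * D
      = (P * k + Z * r) * (u * r * \<psi> - G * (1 - u))"
    unfolding D_def by (simp add: algebra_simps)
  also have "\<dots> \<ge> 0"
    using assms by simp
  finally have "c * ((r + G * k) * D) \<le> c * (r * (1 + u * (k * \<psi> - 1)) * (P - Z * G))"
    using \<open>0 \<le> c\<close> by (intro mult_left_mono) auto
  then have "c * (r + G * k) \<le> (P - Z * G) * (V - M)"
    unfolding V using \<open>0 < D\<close> by (simp add: field_simps)
  also have "\<dots> \<le> (P - Z * G) * V"
    using margin_pos \<open>0 \<le> M\<close> by (intro mult_left_mono) auto
  finally show ?thesis by (simp add: algebra_simps)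
qed

locale bound_parameters =
  fixes m d R :: nat
    and \<sigma> lam L_A L_C L_Z \<eta>0 cstar D \<omega> :: real
  assumes m_ge_1: "m \<ge> 1" and d_ge_1: "d \<ge> 1" and R_ge_1: "R \<ge> 1"
    and lam_pos: "0 < lam" and lam_lt_sigma: "lam < \<sigma>" and sigma_lt_1: "\<sigma> < 1"
    and L_A_nonneg: "L_A \<ge> 0" and L_C_nonneg: "L_C \<ge> 0" and L_Z_nonneg: "L_Z \<ge> 0"
    and eta0_pos: "\<eta>0 > 0" and cstar_nonneg: "cstar \<ge> 0"
    and omega_nonneg: "0 \<le> \<omega>" and omega_lt_omega_bar: "\<omega> < omega_bar R \<sigma> lam L_A L_Z L_C"
begin

abbreviation "V \<equiv> V0 m d R \<sigma> lam L_A L_C L_Z \<eta>0 cstar D \<omega>"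
abbreviation "F \<equiv> Fseq m d R \<sigma> lam L_A L_C L_Z \<eta>0 cstar D \<omega>"
abbreviation "a \<equiv> sqrt (real m * real d) * \<eta>0"
abbreviation "u \<equiv> real R * \<omega> / \<sigma>"
abbreviation "\<Lambda> \<equiv> L_A * real R * psi L_C R"
abbreviation "K \<equiv> (a * (1 + L_C * \<sigma>) + 2 * L_Z * V) / (\<sigma> - \<omega>)"
abbreviation "q \<equiv> 2 * L_C / (1 - \<omega> / \<sigma>)"

lemma sigma_pos: "0 < \<sigma>"
  using lam_pos lam_lt_sigma by simp

lemma a_pos: "0 < a"
  using m_ge_1 d_ge_1 eta0_pos by simp

lemma u_lt_1: "u < 1"
proof -
  have "\<omega> < \<sigma> / real R"
    using omega_lt_omega_bar omega_bar_le_sigma_div[of \<sigma> lam L_A L_Z R L_C]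
      sigma_pos lam_lt_sigma L_A_nonneg L_Z_nonneg by simp
  then show ?thesis using R_ge_1 sigma_pos by (simp add: field_simps)
qed

lemma omega_lt_sigma: "\<omega> < \<sigma>"
proof -
  have "\<omega> \<le> real R * \<omega>" using R_ge_1 omega_nonneg mult_right_mono[of 1 "real R" \<omega>] by simp
  then show ?thesis using u_lt_1 sigma_pos by (simp add: field_simps)
qed

lemma V0_eq:
  "V = max cstar D + \<Lambda> * a * real R * (1 + u * ((1 + L_C * \<sigma>) * psi L_C R - 1))
        / ((\<sigma> - lam) * (1 - u) - u * (2 * L_Z * \<Lambda>) * real R * psi L_C R)"
  and V0_denominator_pos:
  "0 < (\<sigma> - lam) * (1 - u) - u * (2 * L_Z * \<Lambda>) * real R * psi L_C R"
proof -
  note denom = sigma_minus_lam_mult_one_minus_div_omega_bar[OF R_ge_1 sigma_pos lam_lt_sigma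
      L_A_nonneg L_Z_nonneg, of \<omega> L_C, symmetric]
  have "0 < omega_bar R \<sigma> lam L_A L_Z L_C"
    using omega_nonneg omega_lt_omega_bar by linarith
  then have "0 < (\<sigma> - lam) * (1 - \<omega> / omega_bar R \<sigma> lam L_A L_Z L_C)"
    using omega_lt_omega_bar lam_lt_sigma by simp
  then show "0 < (\<sigma> - lam) * (1 - u) - u * (2 * L_Z * \<Lambda>) * real R * psi L_C R"
    unfolding denom .
  then show "V = max cstar D + \<Lambda> * a * real R * (1 + u * ((1 + L_C * \<sigma>) * psi L_C R - 1))
        / ((\<sigma> - lam) * (1 - u) - u * (2 * L_Z * \<Lambda>) * real R * psi L_C R)"
    unfolding denom V0_def using lam_lt_sigma by (simp add: field_simps power2_eq_square)
qed

lemma V0_ge_max: "max cstar D \<le> V"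
proof -
  have "0 \<le> \<Lambda> * a * real R * (1 + u * ((1 + L_C * \<sigma>) * psi L_C R - 1))"
  proof -
    have "1 \<le> (1 + L_C * \<sigma>) * psi L_C R"
      using one_le_psi[of L_C R] L_C_nonneg sigma_pos mult_mono[of 1 "1 + L_C * \<sigma>" 1 "psi L_C R"] by simp
    moreover have "0 \<le> u" using omega_nonneg sigma_pos by simp
    ultimately have "0 \<le> u * ((1 + L_C * \<sigma>) * psi L_C R - 1)"
      by (intro mult_nonneg_nonneg) auto
    moreover have "0 \<le> \<Lambda>" using L_A_nonneg one_le_psi[of L_C R] by simp
    ultimately show ?thesis using a_pos by simp
  qed
  then show ?thesis
    using V0_eq V0_denominator_pos by simp
qed

lemma Fseq_eq: "F s = K * (\<Sum>j<s. q ^ j)"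
  by (simp add: Fseq_def)

lemma Fseq_Suc: "F (Suc n) = K + q * F n"
proof -
  have "(\<Sum>j<Suc n. q ^ j) = 1 + q * (\<Sum>j<n. q ^ j)"
    by (simp only: sum.lessThan_Suc_shift power_0 power_Suc sum_distrib_left)
  then show ?thesis
    unfolding Fseq_eq by (simp only: distrib_left mult_1_right mult.left_commute)
qed

lemma Fseq_nonneg: "0 \<le> F s"
proof -
  have "0 \<le> K"
    using a_pos L_C_nonneg sigma_pos L_Z_nonneg V0_ge_max cstar_nonneg omega_lt_sigma by simp
  moreover have "0 \<le> q"
    using L_C_nonneg omega_lt_sigma sigma_pos by simp
  ultimately show ?thesis
    unfolding Fseq_eq by (intro mult_nonneg_nonneg sum_nonneg zero_le_power)
qed

lemma Fseq_ge_recursive_bounds: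
  assumes "1 \<le> s"
  shows "F s \<ge> max (L_Z * cstar + L_C * sqrt (real m * real d) * \<eta>0 + L_C * (1 + \<omega>) * F (s - 1))
           ((sqrt (real m * real d) * \<eta>0 * (1 + L_C * \<sigma>) + L_C * \<sigma> * (1 + \<omega>) * F (s - 1)
             + L_Z * (1 + \<sigma>) * V) / (\<sigma> - \<omega>))"
proof -
  obtain n where s: "s = Suc n" using assms by (cases s) auto
  have gap: "0 < \<sigma> - \<omega>" "\<sigma> - \<omega> \<le> 1"
    using omega_lt_sigma omega_nonneg sigma_lt_1 by auto
  have q_eq: "q = 2 * L_C * \<sigma> / (\<sigma> - \<omega>)"
    using sigma_pos gap by (simp add: field_simps)
  have V_ge: "cstar \<le> V" "0 \<le> V"
    using V0_ge_max cstar_nonneg by auto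
  have "L_C * (1 + \<omega>) \<le> 2 * L_C * \<sigma> / (\<sigma> - \<omega>)"
  proof -
    have "(1 + \<omega>) * (\<sigma> - \<omega>) \<le> (1 + \<omega>) * \<sigma>"
      using omega_nonneg by (intro mult_left_mono) auto
    also have "\<dots> \<le> 2 * \<sigma>"
      using sigma_pos omega_lt_sigma sigma_lt_1 by (intro mult_right_mono) auto
    finally have "L_C * ((1 + \<omega>) * (\<sigma> - \<omega>)) \<le> L_C * (2 * \<sigma>)"
      using L_C_nonneg by (rule mult_left_mono)
    then show ?thesis using gap by (simp add: field_simps)
  qed
  then have coefficient_bound: "L_C * (1 + \<omega>) * F n \<le> q * F n"
    unfolding q_eq using Fseq_nonneg by (intro mult_right_mono) auto
  have "(L_Z * cstar + L_C * a) * (\<sigma> - \<omega>) \<le> a * (1 + L_C * \<sigma>) + 2 * L_Z * V"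
  proof -
    have "L_Z * cstar * (\<sigma> - \<omega>) \<le> L_Z * V * 2"
      using gap V_ge L_Z_nonneg cstar_nonneg mult_mono[of "L_Z * cstar" "L_Z * V" "\<sigma> - \<omega>" 2]
      by (simp add: mult_left_mono)
    moreover have "L_C * a * (\<sigma> - \<omega>) \<le> L_C * a * \<sigma>"
      using L_C_nonneg a_pos omega_nonneg by (intro mult_left_mono) auto
    ultimately show ?thesis using a_pos by (simp add: algebra_simps)
  qed
  then have constant_bound: "L_Z * cstar + L_C * a \<le> K"
    using gap by (simp add: field_simps)
  have "L_C * \<sigma> * (1 + \<omega>) \<le> L_C * \<sigma> * 2"
    using L_C_nonneg sigma_pos omega_lt_sigma sigma_lt_1 by (intro mult_left_mono) auto
  then have "L_C * \<sigma> * (1 + \<omega>) * F n \<le> L_C * \<sigma> * 2 * F n"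
    using Fseq_nonneg[of n] by (rule mult_right_mono)
  moreover have "L_Z * (1 + \<sigma>) * V \<le> L_Z * 2 * V"
    using L_Z_nonneg sigma_lt_1 V_ge by (intro mult_right_mono mult_left_mono) auto
  ultimately have quotient_bound: "(a * (1 + L_C * \<sigma>) + L_C * \<sigma> * (1 + \<omega>) * F n + L_Z * (1 + \<sigma>) * V)
      / (\<sigma> - \<omega>) \<le> K + q * F n"
    unfolding q_eq using gap by (simp add: divide_right_mono add_divide_distrib[symmetric] ac_simps)
  show ?thesis
    using coefficient_bound constant_bound quotient_bound by (simp add: s Fseq_Suc mult.assoc)
qed

lemma weighted_Fseq_sum_bound:
  obtains G where "\<omega> * (\<Sum>s=1..R. F s) = G * (a * (1 + L_C * \<sigma>) + 2 * L_Z * V)"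
    and "G * (1 - u) \<le> u * real R * psi L_C R"
proof
  define S where "S = (\<Sum>s=1..R. \<Sum>j<s. q ^ j)"
  have t: "0 \<le> \<omega> / \<sigma>" "\<omega> / \<sigma> < 1"
    using omega_nonneg omega_lt_sigma sigma_pos by auto
  have gap: "0 < \<sigma> - \<omega>"
    using omega_lt_sigma by simp
  show "\<omega> * (\<Sum>s=1..R. F s) = \<omega> * S / (\<sigma> - \<omega>) * (a * (1 + L_C * \<sigma>) + 2 * L_Z * V)"
  proof -
    have "(\<Sum>s=1..R. F s) = K * S"
      unfolding Fseq_eq S_def by (rule sum_distrib_left[symmetric])
    then show ?thesis by (simp add: ac_simps)
  qed
  have "S * (1 - real R * (\<omega> / \<sigma>)) \<le> (real R)\<^sup>2 * psi L_C R * (1 - \<omega> / \<sigma>)"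
    unfolding S_def using sum_partial_geometric_sums_le[OF t L_C_nonneg] .
  then have "\<omega> / (\<sigma> - \<omega>) * (S * (1 - u))
      \<le> \<omega> / (\<sigma> - \<omega>) * ((real R)\<^sup>2 * psi L_C R * (1 - \<omega> / \<sigma>))"
    using omega_nonneg gap by (intro mult_left_mono) auto
  also have "\<dots> = u * real R * psi L_C R"
    using sigma_pos gap by (simp add: field_simps power2_eq_square)
  finally show "\<omega> * S / (\<sigma> - \<omega>) * (1 - u) \<le> u * real R * psi L_C R"
    by simp
qed

lemma V0_ge_weighted_sum:
  "(sqrt (real m * real d) * real R * \<eta>0 + \<omega> * (\<Sum>s=1..R. F s)) / (\<sigma> - lam)
     * (L_A * (\<Sum>s<R. L_C ^ s)) \<le> V"
proof -
  obtain G where sum_F: "\<omega> * (\<Sum>s=1..R. F s) = G * (a * (1 + L_C * \<sigma>) + 2 * L_Z * V)"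
    and G_bound: "G * (1 - u) \<le> u * real R * psi L_C R"
    using weighted_Fseq_sum_bound .
  have Lambda_nonneg: "0 \<le> \<Lambda>"
    using L_A_nonneg one_le_psi[of L_C R] by simp
  have "\<Lambda> * a * (real R + G * (1 + L_C * \<sigma>)) + 2 * L_Z * \<Lambda> * G * V \<le> (\<sigma> - lam) * V"
  proof (rule linear_fixed_point_bound[where \<psi> = "psi L_C R" and M = "max cstar D"])
    show "V = max cstar D + \<Lambda> * a * real R * (1 + u * ((1 + L_C * \<sigma>) * psi L_C R - 1))
        / ((\<sigma> - lam) * (1 - u) - u * (2 * L_Z * \<Lambda>) * real R * psi L_C R)"
      by (rule V0_eq)
  qed (use lam_lt_sigma L_Z_nonneg Lambda_nonneg L_C_nonneg sigma_pos u_lt_1 a_pos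
      G_bound V0_denominator_pos cstar_nonneg in auto)
  then have main: "\<Lambda> * (a * real R + \<omega> * (\<Sum>s=1..R. F s)) \<le> (\<sigma> - lam) * V"
    unfolding sum_F by (simp add: algebra_simps)
  have "L_A * (\<Sum>s<R. L_C ^ s) \<le> \<Lambda>"
    using sum_powers_le_psi[OF L_C_nonneg, of R] L_A_nonneg
    by (simp add: mult_left_mono mult.assoc)
  then have "(a * real R + \<omega> * (\<Sum>s=1..R. F s)) / (\<sigma> - lam) * (L_A * (\<Sum>s<R. L_C ^ s))
      \<le> (a * real R + \<omega> * (\<Sum>s=1..R. F s)) / (\<sigma> - lam) * \<Lambda>"
    using eta0_pos omega_nonneg Fseq_nonneg lam_lt_sigma
    by (intro mult_left_mono divide_nonneg_nonneg add_nonneg_nonneg mult_nonneg_nonneg sum_nonneg) auto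
  also have "\<dots> \<le> V"
    using main lam_lt_sigma by (simp add: field_simps)
  finally show ?thesis
    by (simp add: ac_simps)
qed

end

theorem lemma4:
  fixes m d R :: nat
    and \<sigma> lam L_A L_C L_Z \<eta>0 cstar D \<omega> :: real
  assumes "m \<ge> 1" and "d \<ge> 1" and "R \<ge> 1"
    and "0 < lam" and "lam < \<sigma>" and "\<sigma> < 1"
    and "L_A \<ge> 0" and "L_C \<ge> 0" and "L_Z \<ge> 0"
    and "\<eta>0 > 0" and "cstar \<ge> 0" and "D \<ge> 0"
    and "0 \<le> \<omega>" and "\<omega> < omega_bar R \<sigma> lam L_A L_Z L_C"
  shows "V0 m d R \<sigma> lam L_A L_C L_Z \<eta>0 cstar D \<omega> \<ge>
           max D ((sqrt (real m * real d) * real R * \<eta>0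
                   + \<omega> * (\<Sum>s=1..R. Fseq m d R \<sigma> lam L_A L_C L_Z \<eta>0 cstar D \<omega> s))
                  / (\<sigma> - lam) * (L_A * (\<Sum>s<R. L_C ^ s)))
       \<and> (\<forall>s\<in>{1..R}.
           Fseq m d R \<sigma> lam L_A L_C L_Z \<eta>0 cstar D \<omega> s \<ge>
           max (L_Z * cstar + L_C * sqrt (real m * real d) * \<eta>0
                + L_C * (1 + \<omega>) * Fseq m d R \<sigma> lam L_A L_C L_Z \<eta>0 cstar D \<omega> (s - 1))
               ((sqrt (real m * real d) * \<eta>0 * (1 + L_C * \<sigma>)
                 + L_C * \<sigma> * (1 + \<omega>) * Fseq m d R \<sigma> lam L_A L_C L_Z \<eta>0 cstar D \<omega> (s - 1)
                 + L_Z * (1 + \<sigma>) * V0 m d R \<sigma> lam L_A L_C L_Z \<eta>0 cstar D \<omega>)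
                / (\<sigma> - \<omega>)))"
proof -
  interpret bound_parameters m d R \<sigma> lam L_A L_C L_Z \<eta>0 cstar D \<omega>
    using assms by unfold_locales
  show ?thesis
    using V0_ge_max V0_ge_weighted_sum Fseq_ge_recursive_bounds by auto
qed

end
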